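(* In the standing setup, let $y\in K$ satisfy $0\le\langle x_{n+1}-y,\,x_n-x_{n+1}\rangle$ for all integers $n\ge1$. Then $y=0$.
   Context: Standing setup. $X$ is a real Hilbert space. $u\colon[0,\infty)\to X$ satisfies $\langle u(s),u(t)\rangle=\exp(-(s-t)^2)$ for all $s,t\ge0$. $(d_n)_{n\ge1}$ satisfies: $d_n>0$, $\sum_k d_k^2<\infty$, $t_n:=\sum_{k=1}^{n-1}d_k\to+\infty$, $d_1\le1/8$, $d_{n+1}\le d_n/(1+64d_n^2)$ for all $n$. $\rho_1:=1$, $\rho_{n+1}:=\rho_n\exp(-d_n^2)$, $x_n:=\rho_nu(t_n)$. $K$ denotes the smallest closed convex cone containing $\{x_n:n\ge1\}$, i.e. the closed convex hull of $\{\lambda x_n:\lambda\ge0,n\ge1\}$. *)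

theory Defs
  imports "HOL-Analysis.Analysis"
begin

text \<open>Sequences are indexed from 1; the value at index 0 is irrelevant.\<close>

definition tseq :: "(nat \<Rightarrow> real) \<Rightarrow> nat \<Rightarrow> real" where
  "tseq d n = (\<Sum>k\<in>{1..<n}. d k)"

fun rhoseq :: "(nat \<Rightarrow> real) \<Rightarrow> nat \<Rightarrow> real" where
  "rhoseq d 0 = 1"
| "rhoseq d (Suc n) = (if n = 0 then 1 else rhoseq d n * exp (- (d n)\<^sup>2))"

definition xseq :: "(real \<Rightarrow> 'a::real_vector) \<Rightarrow> (nat \<Rightarrow> real) \<Rightarrow> nat \<Rightarrow> 'a" where
  "xseq u d n = rhoseq d n *\<^sub>R u (tseq d n)"

definition Kcone :: "(real \<Rightarrow> 'a::real_normed_vector) \<Rightarrow> (nat \<Rightarrow> real) \<Rightarrow> 'a set" where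
  "Kcone u d = closure (convex hull {c *\<^sub>R xseq u d n | c n. c \<ge> 0 \<and> n \<ge> 1})"

end

theory Submission
  imports Defs
begin

text \<open>Since \<open>\<langle>x\<^sub>n, x\<^sub>n\<^sub>+\<^sub>1\<rangle> = \<rho>\<^sub>n \<rho>\<^sub>n\<^sub>+\<^sub>1 exp (-d\<^sub>n\<^sup>2) = \<parallel>x\<^sub>n\<^sub>+\<^sub>1\<parallel>\<^sup>2\<close>,
  the vector \<open>x\<^sub>n\<^sub>+\<^sub>1\<close> is orthogonal to \<open>x\<^sub>n - x\<^sub>n\<^sub>+\<^sub>1\<close>, so the hypothesis says exactly that
  \<open>\<langle>y, x\<^sub>n\<rangle>\<close> is nondecreasing in \<open>n\<close>. On the other hand \<open>\<langle>x\<^sub>m, x\<^sub>n\<rangle> \<le> exp (-(t\<^sub>n - t\<^sub>m)\<^sup>2) \<rightarrow> 0\<close>,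
  and since the \<open>x\<^sub>n\<close> are bounded, \<open>\<langle>w, x\<^sub>n\<rangle> \<rightarrow> 0\<close> persists to every \<open>w\<close> in the closed
  span of the \<open>x\<^sub>m\<close>, in particular to \<open>y \<in> K\<close>. A nondecreasing sequence with limit \<open>0\<close> is
  nonpositive, so \<open>K\<close> lies in the half-space \<open>\<langle>y, \<cdot>\<rangle> \<le> 0\<close>; taking \<open>y\<close> itself gives
  \<open>\<parallel>y\<parallel>\<^sup>2 \<le> 0\<close>.\<close>

lemma subspace_inner_tendsto_zero:
  fixes X :: "nat \<Rightarrow> 'a::real_inner"
  shows "subspace {w. (\<lambda>n. inner w (X n)) \<longlonglongrightarrow> 0}"
  unfolding subspace_def
  by (auto simp: inner_add_left intro: tendsto_add_zero tendsto_mult_right_zero)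

lemma closed_inner_tendsto_zero:
  fixes X :: "nat \<Rightarrow> 'a::real_inner"
  assumes "bounded (range X)"
  shows "closed {w. (\<lambda>n. inner w (X n)) \<longlonglongrightarrow> 0}"
proof -
  obtain B where B: "B > 0" "\<And>n. norm (X n) \<le> B"
    using assms by (auto simp: bounded_pos)
  have "(\<lambda>n. inner w (X n)) \<longlonglongrightarrow> 0"
    if w: "w \<in> closure {w. (\<lambda>n. inner w (X n)) \<longlonglongrightarrow> 0}" for w
  proof (rule LIMSEQ_I)
    fix e :: real
    assume "e > 0"
    then have "e / (2 * B) > 0"
      using B(1) by simp
    then obtain v where v: "(\<lambda>n. inner v (X n)) \<longlonglongrightarrow> 0" "dist v w < e / (2 * B)"
      using w unfolding closure_approachable by blast
    obtain N where N: "\<And>n. n \<ge> N \<Longrightarrow> \<bar>inner v (X n)\<bar> < e / 2"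
      using LIMSEQ_D[OF v(1), of "e / 2"] \<open>e > 0\<close> by auto
    have "\<bar>inner w (X n)\<bar> < e" if "n \<ge> N" for n
    proof -
      have "\<bar>inner (w - v) (X n)\<bar> \<le> norm (w - v) * norm (X n)"
        by (rule Cauchy_Schwarz_ineq2)
      also have "\<dots> \<le> norm (w - v) * B"
        using B(2) by (simp add: mult_left_mono)
      also have "\<dots> < e / 2"
        using v(2) B(1) by (simp add: dist_norm norm_minus_commute pos_less_divide_eq)
      finally have "\<bar>inner w (X n) - inner v (X n)\<bar> < e / 2"
        by (simp add: inner_diff_left)
      then show ?thesis
        using N[OF that] by linarith
    qed
    then show "\<exists>N. \<forall>n\<ge>N. norm (inner w (X n) - 0) < e"
      by auto
  qed
  then show ?thesis
    by (metis (mono_tags) closure_subset_eq mem_Collect_eq subsetI)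
qed

lemma closure_span_inner_tendsto_zero:
  fixes X :: "nat \<Rightarrow> 'a::real_inner"
  assumes "bounded (range X)"
    and "\<And>s. s \<in> S \<Longrightarrow> (\<lambda>n. inner s (X n)) \<longlonglongrightarrow> 0"
    and "w \<in> closure (span S)"
  shows "(\<lambda>n. inner w (X n)) \<longlonglongrightarrow> 0"
proof -
  have "span S \<subseteq> {w. (\<lambda>n. inner w (X n)) \<longlonglongrightarrow> 0}"
    using assms(2) by (intro span_minimal subspace_inner_tendsto_zero) auto
  then have "closure (span S) \<subseteq> {w. (\<lambda>n. inner w (X n)) \<longlonglongrightarrow> 0}"
    using closed_inner_tendsto_zero[OF assms(1)] by (rule closure_minimal)
  then show ?thesis
    using assms(3) by auto
qed

lemma tseq_nonneg:
  assumes "\<And>n. n \<ge> 1 \<Longrightarrow> d n > 0"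
  shows "tseq d n \<ge> 0"
  unfolding tseq_def using assms by (intro sum_nonneg) (auto intro: less_imp_le)

lemma tseq_Suc:
  assumes "n \<ge> 1"
  shows "tseq d (n + 1) = tseq d n + d n"
  unfolding tseq_def using assms by (simp add: sum.atLeastLessThan_Suc)

lemma rhoseq_pos: "rhoseq d n > 0"
  by (induction n) auto

lemma rhoseq_le_one: "rhoseq d n \<le> 1"
proof (induction n)
  case (Suc n)
  have "rhoseq d n * exp (- (d n)\<^sup>2) \<le> 1 * 1"
    using Suc rhoseq_pos[of d n] by (intro mult_mono) auto
  then show ?case
    by simp
qed simp

context
  fixes u :: "real \<Rightarrow> 'a::real_inner" and d :: "nat \<Rightarrow> real"
  assumes u: "\<And>s t. s \<ge> 0 \<Longrightarrow> t \<ge> 0 \<Longrightarrow> inner (u s) (u t) = exp (- (s - t)\<^sup>2)"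
    and dpos: "\<And>n. n \<ge> 1 \<Longrightarrow> d n > 0"
begin

lemma inner_xseq:
  "inner (xseq u d m) (xseq u d n) = rhoseq d m * rhoseq d n * exp (- (tseq d m - tseq d n)\<^sup>2)"
  unfolding xseq_def using u[OF tseq_nonneg[OF dpos] tseq_nonneg[OF dpos]]
  by (simp add: algebra_simps)

lemma norm_xseq_le_one: "norm (xseq u d n) \<le> 1"
proof -
  have "(norm (xseq u d n))\<^sup>2 = (rhoseq d n)\<^sup>2"
    unfolding power2_norm_eq_inner inner_xseq by (simp add: power2_eq_square)
  then show ?thesis
    using rhoseq_pos[of d n] rhoseq_le_one[of d n] by (simp add: power2_eq_iff_nonneg)
qed

lemma inner_xseq_Suc_diff:
  assumes "n \<ge> 1"
  shows "inner (xseq u d (n + 1)) (xseq u d n - xseq u d (n + 1)) = 0"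
proof -
  have "inner (xseq u d (n + 1)) (xseq u d n) = inner (xseq u d (n + 1)) (xseq u d (n + 1))"
    unfolding inner_xseq tseq_Suc[OF assms] using assms by (simp add: power2_eq_square)
  then show ?thesis
    by (simp add: inner_diff_right)
qed

lemma inner_xseq_tendsto_zero:
  assumes "filterlim (tseq d) at_top sequentially"
  shows "(\<lambda>n. inner (xseq u d m) (xseq u d n)) \<longlonglongrightarrow> 0"
proof (rule Lim_null_comparison)
  have "filterlim (\<lambda>n. (tseq d n - tseq d m)\<^sup>2) at_top sequentially"
    using filterlim_tendsto_add_at_top[OF tendsto_const assms, of "- tseq d m"]
    by (intro filterlim_pow_at_top) simp_all
  then show "(\<lambda>n. exp (- (tseq d m - tseq d n)\<^sup>2)) \<longlonglongrightarrow> 0"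
    by (simp add: power2_commute filterlim_uminus_at_top filterlim_compose[OF exp_at_bot])
  show "\<forall>\<^sub>F n in sequentially. norm (inner (xseq u d m) (xseq u d n)) \<le> exp (- (tseq d m - tseq d n)\<^sup>2)"
    using rhoseq_pos[of d] rhoseq_le_one[of d]
    by (intro always_eventually allI) (simp add: inner_xseq abs_mult mult_le_one less_imp_le)
qed

lemma Kcone_inner_tendsto_zero:
  assumes "filterlim (tseq d) at_top sequentially" and "w \<in> Kcone u d"
  shows "(\<lambda>n. inner w (xseq u d n)) \<longlonglongrightarrow> 0"
proof (rule closure_span_inner_tendsto_zero)
  show "bounded (range (xseq u d))"
    using norm_xseq_le_one by (auto simp: bounded_iff)
  show "(\<lambda>n. inner s (xseq u d n)) \<longlonglongrightarrow> 0"
    if s: "s \<in> {c *\<^sub>R xseq u d m | c m. c \<ge> 0 \<and> m \<ge> 1}" for s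
  proof -
    obtain c m where "s = c *\<^sub>R xseq u d m"
      using s by blast
    then show ?thesis
      using tendsto_mult_right_zero[OF inner_xseq_tendsto_zero[OF assms(1)], of c] by simp
  qed
  show "w \<in> closure (span {c *\<^sub>R xseq u d m | c m. c \<ge> 0 \<and> m \<ge> 1})"
    using assms(2) closure_mono[OF convex_hull_subset_span] unfolding Kcone_def by blast
qed

end

lemma Kcone_subset_halfspace:
  assumes "\<And>n. n \<ge> 1 \<Longrightarrow> inner y (xseq u d n) \<le> 0"
  shows "Kcone u d \<subseteq> {z. inner y z \<le> 0}"
  unfolding Kcone_def
proof (intro closure_minimal hull_minimal)
  show "{c *\<^sub>R xseq u d n | c n. c \<ge> 0 \<and> n \<ge> 1} \<subseteq> {z. inner y z \<le> 0}"
    using assms by (auto simp: mult_nonneg_nonpos)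
qed (simp_all add: convex_halfspace_le closed_halfspace_le)

theorem lemma6p4:
  fixes u :: "real \<Rightarrow> 'a::{real_inner, complete_space}"
    and d :: "nat \<Rightarrow> real" and y :: 'a
  assumes u: "\<And>s t. s \<ge> 0 \<Longrightarrow> t \<ge> 0 \<Longrightarrow> inner (u s) (u t) = exp (- (s - t)\<^sup>2)"
    and dpos: "\<And>n. n \<ge> 1 \<Longrightarrow> d n > 0"
    and dsum: "summable (\<lambda>k. (d k)\<^sup>2)"
    and tinf: "filterlim (tseq d) at_top sequentially"
    and d1: "d 1 \<le> 1/8"
    and ddec: "\<And>n. n \<ge> 1 \<Longrightarrow> d (n + 1) \<le> d n / (1 + 64 * (d n)\<^sup>2)"
    and yK: "y \<in> Kcone u d"
    and hyp: "\<And>n. n \<ge> 1 \<Longrightarrow>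
       0 \<le> inner (xseq u d (n + 1) - y) (xseq u d n - xseq u d (n + 1))"
  shows "y = 0"
proof -
  have "inner y (xseq u d n) \<le> inner y (xseq u d (n + 1))" if "n \<ge> 1" for n
    using hyp[OF that] inner_xseq_Suc_diff[OF u dpos that]
    by (simp add: inner_diff_left inner_diff_right)
  then have "incseq (\<lambda>n. inner y (xseq u d (Suc n)))"
    by (intro incseq_SucI) simp
  moreover have "(\<lambda>n. inner y (xseq u d (Suc n))) \<longlonglongrightarrow> 0"
    using Kcone_inner_tendsto_zero[OF u dpos tinf yK] by (rule LIMSEQ_Suc)
  ultimately have "inner y (xseq u d (Suc k)) \<le> 0" for k
    by (rule incseq_le)
  then have "inner y (xseq u d n) \<le> 0" if "n \<ge> 1" for n
    using that by (metis Suc_pred' less_eq_Suc_le One_nat_def)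
  then have "inner y y \<le> 0"
    using Kcone_subset_halfspace yK by blast
  then show ?thesis
    using inner_ge_zero[of y] by simp
qed

end
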